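(* Let $i$ be an agent and let $P_i^S$ be a probability distribution over depth-0 subjective MAIDs for agent $i$, each of which is a perfect recall game. Let $\mathbf{S}_i(S)=\{S':P_i^S(S')>0\}$ and let $\mathbf{D}_{P_i^S}$ be the set of all decision variables of agent $i$ in the MAIDs $\mathcal{M}^{S'}$, $S'\in\mathbf{S}_i(S)$. If $\mathbf{D}_{P_i^S}$ is finite, then there exists $D\in\mathbf{D}_{P_i^S}$ such that every information set $I\in\mathrm{dom}(\mathbf{pa}(D))\times\{\mathrm{dom}(D)\}$ (belonging to $\mathbf{I}_{P_i^S}$) is a final information set.
   Context: A MAID $(\mathcal{G},\boldsymbol\theta)$ has a DAG on variables partitioned into chance, decision (each belonging to an agent) and utility variables, with conditional distributions $\boldsymbol\theta$ for non-decision variables; $\mathbf{pa}(D)$ / $\mathbf{Pa}_D$ denotes the parents of $D$. An agent has perfect recall if there is a total order $D_1\prec\dots\prec D_m$ of its decisions with $\mathbf{Pa}_{D_j}\cup\{D_j\}\subseteq\mathbf{Pa}_{D_k}$ for $j<k$. A partial-post-policy MAID is $(\mathcal{G},\boldsymbol\theta,\xi)$ with $\xi$ a set of conditional distributions $\pi_D(D\mid\mathbf{Pa}_D)$ for some decisions $D$. A depth-0 subjective MAID for agent $i$ is a partial-post-policy MAID in which $\xi$ assigns a policy to every decision variable of every agent other than $i$. For a subjective MAID $S'$ with MAID $\mathcal{M}^{S'}$, $\mathbf{I}_{S',i}$ is the set of pairs $(\mathbf{pa}_{D},\mathrm{dom}(D))$ over decisions $D$ of agent $i$ in $\mathcal{M}^{S'}$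 and settings $\mathbf{pa}_D$ of its parents with positive probability under some policy. An information set $I=(\mathbf{p},\mathbf{d})$ is encounterable by agent $i$ in $S'$ if $\mathcal{M}^{S'}$ has a decision $D_i$ of $i$ with $\mathbf{p}\in\mathrm{dom}(\mathbf{pa}_{D_i})$ and $\mathbf{d}=\mathrm{dom}(D_i)$. Let $\mathbf{I}_{P_i^S}=\bigcup_{S'\in\mathbf{S}_i(S)}\mathbf{I}_{S',i}$. An information set $I\in\mathbf{I}_{P_i^S}$ is final if there is no $S'\in\mathbf{S}_i(S)$ in which $I$ is encounterable at a decision $D_i$ of $i$ for which some other decision $D'_i$ of $i$ in $\mathcal{M}^{S'}$ has $D_i\in\mathbf{pa}(D'_i)$. *)

theory Defs
  imports "HOL-Probability.Probability_Mass_Function"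
begin

text \<open>Variables are drawn from a common universe 'v (so that the same decision
variable can be identified across different subjective MAIDs), values from 'a,
agents from 'ag.\<close>

datatype 'ag vkind = Chance | Decision 'ag | Utility

type_synonym ('v, 'a) setting = "'v \<Rightarrow> 'a option"

type_synonym ('v, 'a) cpd = "('v, 'a) setting \<Rightarrow> 'a \<Rightarrow> real"

record ('v, 'a, 'ag) maid =
  Vars  :: "'v set"
  Pa    :: "'v \<Rightarrow> 'v set"
  Kind  :: "'v \<Rightarrow> 'ag vkind"
  Dom   :: "'v \<Rightarrow> 'a set"
  Theta :: "'v \<Rightarrow> ('v, 'a) cpd"

definition settings :: "('v, 'a, 'ag) maid \<Rightarrow> 'v set \<Rightarrow> ('v, 'a) setting set" where
  "settings M A = {p. dom p = A \<and> (\<forall>v\<in>A. the (p v) \<in> Dom M v)}"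

definition is_decision :: "('v, 'a, 'ag) maid \<Rightarrow> 'v \<Rightarrow> bool" where
  "is_decision M v \<longleftrightarrow> (\<exists>j. Kind M v = Decision j)"

definition decisions_of :: "('v, 'a, 'ag) maid \<Rightarrow> 'ag \<Rightarrow> 'v set" where
  "decisions_of M i = {v \<in> Vars M. Kind M v = Decision i}"

definition is_cpd :: "('v, 'a, 'ag) maid \<Rightarrow> 'v \<Rightarrow> ('v, 'a) cpd \<Rightarrow> bool" where
  "is_cpd M v f \<longleftrightarrow> (\<forall>p\<in>settings M (Pa M v).
       (\<forall>x\<in>Dom M v. f p x \<ge> 0) \<and> (\<Sum>x\<in>Dom M v. f p x) = 1)"

definition wf_maid :: "('v, 'a, 'ag) maid \<Rightarrow> bool" where
  "wf_maid M \<longleftrightarrow>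
     finite (Vars M) \<and>
     (\<forall>v\<in>Vars M. Pa M v \<subseteq> Vars M \<and> finite (Dom M v) \<and> Dom M v \<noteq> {}) \<and>
     acyclic {(u, v). v \<in> Vars M \<and> u \<in> Pa M v} \<and>
     (\<forall>v\<in>Vars M. \<forall>u\<in>Pa M v. Kind M u \<noteq> Utility) \<and>
     (\<forall>v\<in>Vars M. \<not> is_decision M v \<longrightarrow> is_cpd M v (Theta M v))"

definition perfect_recall :: "('v, 'a, 'ag) maid \<Rightarrow> 'ag \<Rightarrow> bool" where
  "perfect_recall M j \<longleftrightarrow> (\<exists>ds. distinct ds \<and> set ds = decisions_of M j \<and>
     (\<forall>k l. k < l \<and> l < length ds \<longrightarrow> Pa M (ds ! k) \<union> {ds ! k} \<subseteq> Pa M (ds ! l)))"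

definition perfect_recall_game :: "('v, 'a, 'ag) maid \<Rightarrow> bool" where
  "perfect_recall_game M \<longleftrightarrow> (\<forall>j. perfect_recall M j)"

text \<open>A partial-post-policy MAID (G, theta, xi): a MAID together with policies for
  some of its decisions.\<close>
type_synonym ('v, 'a, 'ag) ppmaid = "('v, 'a, 'ag) maid \<times> ('v \<Rightarrow> ('v, 'a) cpd option)"

definition wf_ppmaid :: "('v, 'a, 'ag) ppmaid \<Rightarrow> bool" where
  "wf_ppmaid S \<longleftrightarrow> wf_maid (fst S) \<and>
     (\<forall>D f. snd S D = Some f \<longrightarrow> D \<in> Vars (fst S) \<and> is_decision (fst S) D \<and> is_cpd (fst S) D f)"

definition depth0_subjective :: "'ag \<Rightarrow> ('v, 'a, 'ag) ppmaid \<Rightarrow> bool" where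
  "depth0_subjective i S \<longleftrightarrow> wf_ppmaid S \<and>
     (\<forall>D\<in>Vars (fst S). \<forall>j. Kind (fst S) D = Decision j \<and> j \<noteq> i \<longrightarrow> snd S D \<noteq> None)"

definition maid_of :: "('v, 'a, 'ag) ppmaid \<Rightarrow> ('v, 'a, 'ag) maid" where
  "maid_of S = (fst S)\<lparr> Kind := (\<lambda>v. if snd S v \<noteq> None then Chance else Kind (fst S) v),
                         Theta := (\<lambda>v. case snd S v of None \<Rightarrow> Theta (fst S) v | Some f \<Rightarrow> f) \<rparr>"

definition valid_policy :: "('v, 'a, 'ag) maid \<Rightarrow> ('v \<Rightarrow> ('v, 'a) cpd) \<Rightarrow> bool" where
  "valid_policy M \<sigma> \<longleftrightarrow> (\<forall>D\<in>Vars M. is_decision M D \<longrightarrow> is_cpd M D (\<sigma> D))"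

definition joint_prob :: "('v, 'a, 'ag) maid \<Rightarrow> ('v \<Rightarrow> ('v, 'a) cpd) \<Rightarrow> ('v, 'a) setting \<Rightarrow> real" where
  "joint_prob M \<sigma> x = (\<Prod>v\<in>Vars M.
      (if is_decision M v then \<sigma> v else Theta M v) (x |` Pa M v) (the (x v)))"

definition prob_pa :: "('v, 'a, 'ag) maid \<Rightarrow> ('v \<Rightarrow> ('v, 'a) cpd) \<Rightarrow> 'v \<Rightarrow> ('v, 'a) setting \<Rightarrow> real" where
  "prob_pa M \<sigma> D p = (\<Sum>x\<in>{x \<in> settings M (Vars M). x |` Pa M D = p}. joint_prob M \<sigma> x)"

type_synonym ('v, 'a) infoset = "('v, 'a) setting \<times> 'a set"

definition infosets_subj :: "('v, 'a, 'ag) ppmaid \<Rightarrow> 'ag \<Rightarrow> ('v, 'a) infoset set" where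
  "infosets_subj S i = {(p, Dom (maid_of S) D) | p D.
      D \<in> decisions_of (maid_of S) i \<and> p \<in> settings (maid_of S) (Pa (maid_of S) D) \<and>
      (\<exists>\<sigma>. valid_policy (maid_of S) \<sigma> \<and> prob_pa (maid_of S) \<sigma> D p > 0)}"

definition encounterable_at :: "'ag \<Rightarrow> ('v, 'a, 'ag) ppmaid \<Rightarrow> ('v, 'a) infoset \<Rightarrow> 'v \<Rightarrow> bool" where
  "encounterable_at i S I D \<longleftrightarrow> D \<in> decisions_of (maid_of S) i \<and>
      fst I \<in> settings (maid_of S) (Pa (maid_of S) D) \<and> snd I = Dom (maid_of S) D"

definition encounterable :: "'ag \<Rightarrow> ('v, 'a, 'ag) ppmaid \<Rightarrow> ('v, 'a) infoset \<Rightarrow> bool" where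
  "encounterable i S I \<longleftrightarrow> (\<exists>D. encounterable_at i S I D)"

text \<open>I_{P_i^S}: union over the support S_i(S) = set_pmf P.\<close>
definition infosets_P :: "('v, 'a, 'ag) ppmaid pmf \<Rightarrow> 'ag \<Rightarrow> ('v, 'a) infoset set" where
  "infosets_P P i = (\<Union>S\<in>set_pmf P. infosets_subj S i)"

definition decisions_P :: "('v, 'a, 'ag) ppmaid pmf \<Rightarrow> 'ag \<Rightarrow> 'v set" where
  "decisions_P P i = (\<Union>S\<in>set_pmf P. decisions_of (maid_of S) i)"

definition final_infoset :: "('v, 'a, 'ag) ppmaid pmf \<Rightarrow> 'ag \<Rightarrow> ('v, 'a) infoset \<Rightarrow> bool" where
  "final_infoset P i I \<longleftrightarrow> I \<in> infosets_P P i \<and>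
     \<not> (\<exists>S\<in>set_pmf P. \<exists>D. encounterable_at i S I D \<and>
           (\<exists>D'\<in>decisions_of (maid_of S) i. D' \<noteq> D \<and> D \<in> Pa (maid_of S) D'))"

end

theory Submission
  imports Defs
begin

text \<open>Rank each decision D of agent i in a subjective MAID by the number of its
parents that are decisions of i somewhere in the support. Under perfect recall a
decision that is a parent of another decision of i has strictly smaller rank, since
the later decision observes all its parents and the decision itself. As there are
finitely many such decisions, the rank is bounded and attains a maximum; at a
maximising D, any information set encountered with the parents of D cannot belong
to a decision that feeds into a later one, so it is final.\<close>

lemma wf_maid_parent_asym:
  assumes "wf_maid M" and "a \<in> Vars M" and "b \<in> Vars M" and "a \<in> Pa M b"
  shows "b \<notin> Pa M a"
proof
  let ?R = "{(u, v). v \<in> Vars M \<and> u \<in> Pa M v}"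
  assume "b \<in> Pa M a"
  with assms have "(a, b) \<in> ?R" "(b, a) \<in> ?R" by auto
  then have "(a, a) \<in> ?R\<^sup>+" by (rule trancl_into_trancl[OF r_into_trancl])
  moreover have "acyclic ?R" using assms(1) unfolding wf_maid_def by blast
  ultimately show False unfolding acyclic_def by blast
qed

lemma perfect_recall_comparable:
  assumes "perfect_recall M i"
    and "a \<in> decisions_of M i" and "b \<in> decisions_of M i" and "a \<noteq> b"
  shows "Pa M a \<union> {a} \<subseteq> Pa M b \<or> Pa M b \<union> {b} \<subseteq> Pa M a"
proof -
  obtain ds where ds: "set ds = decisions_of M i"
    "\<forall>k l. k < l \<and> l < length ds \<longrightarrow> Pa M (ds ! k) \<union> {ds ! k} \<subseteq> Pa M (ds ! l)"
    using assms(1) unfolding perfect_recall_def by blast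
  obtain k l where k: "k < length ds" "ds ! k = a" and l: "l < length ds" "ds ! l = b"
    using assms(2,3) ds(1) by (metis in_set_conv_nth)
  with assms(4) have "k \<noteq> l" by auto
  then have "k < l \<or> l < k" by arith
  with ds(2) k l show ?thesis by blast
qed

lemma perfect_recall_parent_psubset:
  assumes "wf_maid M" and "perfect_recall M i"
    and "a \<in> decisions_of M i" and "b \<in> decisions_of M i" and "a \<noteq> b"
    and "a \<in> Pa M b" and "a \<in> X"
  shows "Pa M a \<inter> X \<subset> Pa M b \<inter> X"
proof -
  have vars: "a \<in> Vars M" "b \<in> Vars M"
    using assms(3,4) unfolding decisions_of_def by auto
  have "b \<notin> Pa M a" "a \<notin> Pa M a"
    using wf_maid_parent_asym[OF assms(1) vars] wf_maid_parent_asym[OF assms(1) vars(1,1)] assms(6)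
    by auto
  then have "Pa M a \<union> {a} \<subseteq> Pa M b"
    using perfect_recall_comparable[OF assms(2-5)] by blast
  with \<open>a \<notin> Pa M a\<close> assms(7) show ?thesis by blast
qed

lemma Pa_maid_of [simp]: "Pa (maid_of S) = Pa (fst S)"
  by (simp add: maid_of_def)

lemma decisions_of_maid_of_subset: "decisions_of (maid_of S) i \<subseteq> decisions_of (fst S) i"
  by (auto simp: maid_of_def decisions_of_def split: if_splits)

lemma settings_eq_imp_eq:
  "p \<in> settings M A \<Longrightarrow> p \<in> settings M' B \<Longrightarrow> A = B"
  by (simp add: settings_def)

definition recall_rank :: "('v, 'a, 'ag) ppmaid pmf \<Rightarrow> 'ag \<Rightarrow> ('v, 'a, 'ag) ppmaid \<Rightarrow> 'v \<Rightarrow> nat"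
  where "recall_rank P i S D = card (Pa (fst S) D \<inter> decisions_P P i)"

lemma recall_rank_less:
  assumes "S \<in> set_pmf P" and "wf_maid (fst S)" and "perfect_recall (fst S) i"
    and "finite (decisions_P P i)"
    and "D \<in> decisions_of (maid_of S) i" and "D' \<in> decisions_of (maid_of S) i"
    and "D \<noteq> D'" and "D \<in> Pa (fst S) D'"
  shows "recall_rank P i S D < recall_rank P i S D'"
proof -
  have "D \<in> decisions_P P i" using assms(1,5) unfolding decisions_P_def by blast
  moreover have "D \<in> decisions_of (fst S) i" "D' \<in> decisions_of (fst S) i"
    using assms(5,6) decisions_of_maid_of_subset[of S i] by auto
  ultimately have "Pa (fst S) D \<inter> decisions_P P i \<subset> Pa (fst S) D' \<inter> decisions_P P i"
    using perfect_recall_parent_psubset[OF assms(2,3)] assms(7,8) by blast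
  with assms(4) show ?thesis
    unfolding recall_rank_def by (simp add: psubset_card_mono)
qed

lemma final_infoset_of_max_recall_rank:
  assumes prg: "\<forall>S\<in>set_pmf P. depth0_subjective i S \<and> perfect_recall_game (fst S)"
    and fin: "finite (decisions_P P i)"
    and max: "\<forall>S'\<in>set_pmf P. \<forall>D'\<in>decisions_of (maid_of S') i.
                recall_rank P i S' D' \<le> recall_rank P i S D"
    and p: "p \<in> settings (maid_of S) (Pa (maid_of S) D)"
    and I: "(p, Dom (maid_of S) D) \<in> infosets_P P i"
  shows "final_infoset P i (p, Dom (maid_of S) D)"
  unfolding final_infoset_def
proof (intro conjI I notI)
  assume "\<exists>S2\<in>set_pmf P. \<exists>D2. encounterable_at i S2 (p, Dom (maid_of S) D) D2 \<and>
            (\<exists>D'\<in>decisions_of (maid_of S2) i. D' \<noteq> D2 \<and> D2 \<in> Pa (maid_of S2) D')"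
  then obtain S2 D2 D' where S2: "S2 \<in> set_pmf P"
    and enc: "encounterable_at i S2 (p, Dom (maid_of S) D) D2"
    and D': "D' \<in> decisions_of (maid_of S2) i" "D' \<noteq> D2" "D2 \<in> Pa (fst S2) D'"
    by auto
  have D2: "D2 \<in> decisions_of (maid_of S2) i"
    and p2: "p \<in> settings (maid_of S2) (Pa (maid_of S2) D2)"
    using enc unfolding encounterable_at_def by auto
  have "recall_rank P i S D = recall_rank P i S2 D2"
    using settings_eq_imp_eq[OF p p2] by (simp add: recall_rank_def)
  also have "\<dots> < recall_rank P i S2 D'"
    using recall_rank_less[OF S2 _ _ fin D2 D'(1)] D' prg S2
    unfolding depth0_subjective_def wf_ppmaid_def perfect_recall_game_def by auto
  finally have "recall_rank P i S D < recall_rank P i S2 D'" .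
  moreover have "recall_rank P i S2 D' \<le> recall_rank P i S D"
    using max S2 D'(1) by blast
  ultimately show False by simp
qed

theorem mainTheorem4:
  fixes P :: "('v, 'a, 'ag) ppmaid pmf" and i :: 'ag
  assumes "\<forall>S\<in>set_pmf P. depth0_subjective i S \<and> perfect_recall_game (fst S)"
    and "finite (decisions_P P i)"
    and "decisions_P P i \<noteq> {}"
  shows "\<exists>S\<in>set_pmf P. \<exists>D\<in>decisions_of (maid_of S) i.
           \<forall>p\<in>settings (maid_of S) (Pa (maid_of S) D).
             (p, Dom (maid_of S) D) \<in> infosets_P P i \<longrightarrow> final_infoset P i (p, Dom (maid_of S) D)"
proof -
  let ?A = "\<lambda>x. fst x \<in> set_pmf P \<and> snd x \<in> decisions_of (maid_of (fst x)) i"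
  let ?rank = "\<lambda>x. recall_rank P i (fst x) (snd x)"
  obtain S0 D0 where "S0 \<in> set_pmf P" "D0 \<in> decisions_of (maid_of S0) i"
    using assms(3) unfolding decisions_P_def by blast
  then have "?A (S0, D0)" by simp
  moreover have "\<forall>x. ?A x \<longrightarrow> ?rank x < Suc (card (decisions_P P i))"
    using assms(2) by (auto simp: recall_rank_def le_imp_less_Suc card_mono)
  ultimately obtain x where x: "?A x" and max: "\<forall>y. ?A y \<longrightarrow> ?rank y \<le> ?rank x"
    using ex_has_greatest_nat[of ?A "(S0, D0)" ?rank] by blast
  have "\<forall>S'\<in>set_pmf P. \<forall>D'\<in>decisions_of (maid_of S') i. recall_rank P i S' D' \<le> ?rank x"
  proof (intro ballI)
    fix S' D' assume "S' \<in> set_pmf P" "D' \<in> decisions_of (maid_of S') i"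
    then show "recall_rank P i S' D' \<le> ?rank x" using max[rule_format, of "(S', D')"] by simp
  qed
  with x show ?thesis
    using final_infoset_of_max_recall_rank[OF assms(1,2)] by blast
qed

end
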